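(* Let $U$ be an $n\times n$ unitary matrix. Suppose $W$ is an $n\times n$ unitary matrix such that $U = W U' W^*$, where $$U' = \operatorname{diag}\Big( \begin{bmatrix}\xi_1 I_{n_1} & 0\\ 0 & \overline{\xi_1} I_{n_1}\end{bmatrix}, \ldots, \begin{bmatrix}\xi_d I_{n_d} & 0\\ 0 & \overline{\xi_d} I_{n_d}\end{bmatrix}, \begin{bmatrix} I_\ell & 0\\ 0 & -I_k\end{bmatrix}\Big),$$ with $n_1,\dots,n_d\ge 1$, $\ell,k\ge 0$, $2n_1+\cdots+2n_d+\ell+k = n$, and $\xi_1,\dots,\xi_d \in \mathbb{T}\setminus\{1,-1\}$ such that $\xi_1,\dots,\xi_d,\overline{\xi_1},\dots,\overline{\xi_d}$ are pairwise distinct (blocks $I_\ell$ or $-I_k$ are absent when $\ell=0$ or $k=0$). Then every conjugation $C$ on $\mathbb{C}^n$ with $CUC = U$ has the form $$C = W\, \operatorname{diag}\Big( \begin{bmatrix} 0 & V_1\\ V_1^t & 0\end{bmatrix}, \ldots, \begin{bmatrix} 0 & V_d\\ V_d^t & 0\end{bmatrix}, \begin{bmatrix} Q_\ell & 0\\ 0 & Q_k\end{bmatrix}\Big)\, J\, W^*,$$ where each $V_j$ is an $n_j\times n_j$ unitary matrix, $Q_\ell$ and $Q_k$ are $\ell\times\ell$ and $k\times k$ unitary matrices with $Q_\ell^t = Q_\ell$ and $Q_k^t = Q_k$ (absent when $\ell=0$, resp. $k=0$), and $J$ is the conjugation on $\mathbb{C}^n$ given by $J[x_1,\dots,x_n]^t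 = [\overline{x_1},\dots,\overline{x_n}]^t$.
   Context: A conjugation on $\mathbb{C}^n$ is an antilinear, isometric map $C$ with $C^2=I$. $I_m$ denotes the $m\times m$ identity matrix, $^t$ denotes transpose, $\mathbb{T}$ is the unit circle, and $\operatorname{diag}(\cdot)$ denotes a block diagonal matrix. *)

theory Defs
  imports "Jordan_Normal_Form.Schur_Decomposition"
begin

definition unitary_mat :: "nat \<Rightarrow> complex mat \<Rightarrow> bool" where
  "unitary_mat m A \<longleftrightarrow> A \<in> carrier_mat m m \<and>
     mat_adjoint A * A = 1\<^sub>m m \<and> A * mat_adjoint A = 1\<^sub>m m"

definition vnorm_sq :: "complex vec \<Rightarrow> real" where
  "vnorm_sq x = (\<Sum>i<dim_vec x. (cmod (x $ i))^2)"

definition conjugation :: "nat \<Rightarrow> (complex vec \<Rightarrow> complex vec) \<Rightarrow> bool" where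
  "conjugation m C \<longleftrightarrow>
     (\<forall>x\<in>carrier_vec m. C x \<in> carrier_vec m) \<and>
     (\<forall>x\<in>carrier_vec m. \<forall>y\<in>carrier_vec m. C (x + y) = C x + C y) \<and>
     (\<forall>a. \<forall>x\<in>carrier_vec m. C (a \<cdot>\<^sub>v x) = cnj a \<cdot>\<^sub>v C x) \<and>
     (\<forall>x\<in>carrier_vec m. vnorm_sq (C x) = vnorm_sq x) \<and>
     (\<forall>x\<in>carrier_vec m. C (C x) = x)"

definition rot_block :: "complex \<Rightarrow> nat \<Rightarrow> complex mat" where
  "rot_block \<xi> m = four_block_mat (\<xi> \<cdot>\<^sub>m 1\<^sub>m m) (0\<^sub>m m m) (0\<^sub>m m m) (cnj \<xi> \<cdot>\<^sub>m 1\<^sub>m m)"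

definition swap_block :: "complex mat \<Rightarrow> complex mat" where
  "swap_block V = four_block_mat (0\<^sub>m (dim_row V) (dim_row V)) V (transpose_mat V)
       (0\<^sub>m (dim_row V) (dim_row V))"

end

theory Submission
  imports Defs
begin

text \<open>
  A conjugation C on C^n is x \<mapsto> N conj(x), where the columns of N are the images C e_j.
  Since C is isometric, N is unitary; since C C = I, N conj(N) = I, hence conj(N) = N^-1 = N^*
  and N is symmetric. Replacing C by x \<mapsto> W^* C (W x) reduces U to the diagonal matrix
  D = U', and C D C = D becomes M conj(D) = D M for the symmetric unitary matrix M of the new
  conjugation, i.e. M_ij \<noteq> 0 only when d_i = conj(d_j). As the xi_j, their conjugates, 1 and
  -1 are pairwise distinct, M is block diagonal: on the block of xi_j I \<oplus> conj(xi_j) I the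
  diagonal sub-blocks vanish because xi_j is not real, and symmetry of M leaves
  [[0, V], [V^T, 0]]; on the block I_l \<oplus> -I_k two symmetric unitaries remain.
\<close>

definition conj_mat :: "'a :: conjugate mat \<Rightarrow> 'a mat" where
  "conj_mat A = map_mat conjugate A"

lemma conj_mat_carrier [simp]: "conj_mat A \<in> carrier_mat m n \<longleftrightarrow> A \<in> carrier_mat m n"
  and dim_conj_mat [simp]: "dim_row (conj_mat A) = dim_row A" "dim_col (conj_mat A) = dim_col A"
  and index_conj_mat [simp]:
    "i < dim_row A \<Longrightarrow> j < dim_col A \<Longrightarrow> conj_mat A $$ (i, j) = conjugate (A $$ (i, j))"
  unfolding conj_mat_def carrier_mat_def by simp_all

lemma conj_mat_conj_mat [simp]: "conj_mat (conj_mat A) = A"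
  by (rule eq_matI) simp_all

lemma conjugate_mult_mat_vec:
  fixes A :: "'a :: conjugatable_ring mat"
  assumes "dim_vec v = dim_col A"
  shows "conjugate (A *\<^sub>v v) = conj_mat A *\<^sub>v conjugate v"
  using assms by (intro eq_vecI) (auto simp: scalar_prod_def sum_conjugate conjugate_dist_mul)

lemma conj_mat_mult_vec_conjugate:
  fixes A :: "'a :: conjugatable_ring mat"
  assumes "A \<in> carrier_mat m n" "v \<in> carrier_vec n"
  shows "conj_mat A *\<^sub>v v = conjugate (A *\<^sub>v conjugate v)"
  using assms conjugate_mult_mat_vec[of "conjugate v" A] by auto

lemma dim_mat_adjoint [simp]:
  "dim_row (mat_adjoint A) = dim_col A" "dim_col (mat_adjoint A) = dim_row A"
  unfolding mat_adjoint_def by simp_all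

lemma mat_adjoint_carrier [simp]: "mat_adjoint A \<in> carrier_mat n m \<longleftrightarrow> A \<in> carrier_mat m n"
  unfolding carrier_mat_def by auto

lemma index_mat_adjoint [simp]:
  "i < dim_col A \<Longrightarrow> j < dim_row A \<Longrightarrow> mat_adjoint A $$ (i, j) = conjugate (A $$ (j, i))"
  unfolding mat_adjoint_def by (simp add: mat_of_rows_index)

lemma mat_adjoint_mat_adjoint [simp]: "mat_adjoint (mat_adjoint A) = A"
  by (rule eq_matI) simp_all

lemma transpose_mat_adjoint: "transpose_mat (mat_adjoint A) = conj_mat A"
  by (rule eq_matI) simp_all

lemma conj_mat_transpose: "conj_mat (transpose_mat A) = mat_adjoint A"
  by (rule eq_matI) simp_all

lemma mat_adjoint_zero [simp]: "mat_adjoint (0\<^sub>m m n) = 0\<^sub>m n m"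
  by (rule eq_matI) auto

lemma mat_adjoint_four_block_mat:
  assumes "A \<in> carrier_mat r1 c1" "B \<in> carrier_mat r1 c2" "C \<in> carrier_mat r2 c1" "D \<in> carrier_mat r2 c2"
  shows "mat_adjoint (four_block_mat A B C D) =
    four_block_mat (mat_adjoint A) (mat_adjoint C) (mat_adjoint B) (mat_adjoint D)"
  by (rule eq_matI) (use assms in auto)

lemma mult_unit_vec_eq_col:
  "(A :: 'a :: semiring_1 mat) \<in> carrier_mat m n \<Longrightarrow> j < n \<Longrightarrow> A *\<^sub>v unit_vec n j = col A j"
  by (intro eq_vecI) (auto simp: carrier_matD)

lemma eq_mat_on_vecI:
  fixes A B :: "'a :: semiring_1 mat"
  assumes "A \<in> carrier_mat m n" "B \<in> carrier_mat m n"
    and "\<And>v. v \<in> carrier_vec n \<Longrightarrow> A *\<^sub>v v = B *\<^sub>v v"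
  shows "A = B"
proof (rule eq_matI)
  fix i j assume "i < dim_row B" "j < dim_col B"
  then have "col A j $ i = col B j $ i"
    using assms assms(3)[of "unit_vec n j"] by (simp add: mult_unit_vec_eq_col)
  then show "A $$ (i, j) = B $$ (i, j)"
    using assms \<open>i < dim_row B\<close> \<open>j < dim_col B\<close> by simp
qed (use assms in auto)

lemma unitary_mat_carrier: "unitary_mat n A \<Longrightarrow> A \<in> carrier_mat n n"
  unfolding unitary_mat_def by simp

lemma unitary_mat_adjoint: "unitary_mat n A \<Longrightarrow> unitary_mat n (mat_adjoint A)"
  unfolding unitary_mat_def by auto

lemma unitary_mat_if_left_inverse:
  assumes "A \<in> carrier_mat n n" "mat_adjoint A * A = 1\<^sub>m n"
  shows "unitary_mat n A"
  using assms mat_mult_left_right_inverse[of "mat_adjoint A" n A] unfolding unitary_mat_def by simp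

lemma unitary_mat_vec_cancel:
  assumes "unitary_mat n W" "v \<in> carrier_vec n"
  shows "W *\<^sub>v (mat_adjoint W *\<^sub>v v) = v" "mat_adjoint W *\<^sub>v (W *\<^sub>v v) = v"
  using assms assoc_mult_mat_vec[of W n n "mat_adjoint W" n v] assoc_mult_mat_vec[of "mat_adjoint W" n n W n v]
  unfolding unitary_mat_def by auto

section \<open>Unitary matrices as isometries\<close>

lemma vnorm_sq_conjugate [simp]: "vnorm_sq (conjugate v) = vnorm_sq v"
  unfolding vnorm_sq_def by simp

lemma of_real_vnorm_sq: "complex_of_real (vnorm_sq v) = conjugate v \<bullet> v"
  unfolding vnorm_sq_def scalar_prod_def of_real_sum
  by (intro sum.cong) (auto simp: complex_norm_square mult.commute simp flip: of_real_power)

lemma vnorm_sq_add_smult: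
  assumes "u \<in> carrier_vec n" "w \<in> carrier_vec n"
  shows "vnorm_sq (u + c \<cdot>\<^sub>v w) =
    vnorm_sq u + (cmod c)\<^sup>2 * vnorm_sq w + 2 * Re (c * (conjugate u \<bullet> w))"
proof -
  have "(cmod (a + c * b))\<^sup>2 = (cmod a)\<^sup>2 + (cmod c)\<^sup>2 * (cmod b)\<^sup>2 + 2 * Re (c * (cnj a * b))"
    for a b :: complex
    by (simp only: cmod_power2) (simp add: power2_eq_square algebra_simps)
  then show ?thesis
    using assms by (simp add: vnorm_sq_def scalar_prod_def sum.distrib sum_distrib_left
        Re_sum lessThan_atLeast0)
qed

lemma vnorm_sq_unit_vec: "i < n \<Longrightarrow> vnorm_sq (unit_vec n i) = 1"
  unfolding vnorm_sq_def by (simp add: unit_vec_def if_distrib[of "\<lambda>z. (cmod z)\<^sup>2"] cong: if_cong)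

lemma unitary_mat_iff_isometry:
  assumes N: "N \<in> carrier_mat n n"
  shows "unitary_mat n N \<longleftrightarrow> (\<forall>x\<in>carrier_vec n. vnorm_sq (N *\<^sub>v x) = vnorm_sq x)"
proof
  assume "unitary_mat n N"
  then have NN: "mat_adjoint N * N = 1\<^sub>m n" unfolding unitary_mat_def by simp
  show "\<forall>x\<in>carrier_vec n. vnorm_sq (N *\<^sub>v x) = vnorm_sq x"
  proof
    fix x :: "complex vec" assume x: "x \<in> carrier_vec n"
    have "conjugate (N *\<^sub>v x) \<bullet> (N *\<^sub>v x) =
        (transpose_mat (mat_adjoint N) *\<^sub>v conjugate x) \<bullet> (N *\<^sub>v x)"
      using N x by (simp add: conjugate_mult_mat_vec transpose_mat_adjoint)
    also have "\<dots> = conjugate x \<bullet> ((mat_adjoint N * N) *\<^sub>v x)"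
      using N x by (simp add: transpose_vec_mult_scalar[of _ n n])
    finally have "conjugate (N *\<^sub>v x) \<bullet> (N *\<^sub>v x) = conjugate x \<bullet> x"
      using NN x by simp
    then show "vnorm_sq (N *\<^sub>v x) = vnorm_sq x"
      unfolding of_real_vnorm_sq[symmetric] by simp
  qed
next
  assume iso: "\<forall>x\<in>carrier_vec n. vnorm_sq (N *\<^sub>v x) = vnorm_sq x"
  have col_norm: "vnorm_sq (col N i) = 1" if "i < n" for i
    using iso[rule_format, of "unit_vec n i"] that N by (simp add: mult_unit_vec_eq_col vnorm_sq_unit_vec)
  have col_orth: "conjugate (col N i) \<bullet> col N j = 0" if ij: "i < n" "j < n" "i \<noteq> j" for i j
  proof -
    \<comment> \<open>polarization: compare the norms of e_i + c e_j and of its image\<close>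
    have Re0: "Re (c * (conjugate (col N i) \<bullet> col N j)) = 0" for c
    proof -
      have "N *\<^sub>v (unit_vec n i + c \<cdot>\<^sub>v unit_vec n j) = col N i + c \<cdot>\<^sub>v col N j"
        using N ij by (simp add: mult_add_distrib_mat_vec[of N n n] mult_mat_vec[of N n n]
            mult_unit_vec_eq_col)
      moreover have "conjugate (unit_vec n i) \<bullet> unit_vec n j = (0 :: complex)"
        using ij by (simp add: scalar_prod_def unit_vec_def)
      ultimately show ?thesis
        using iso[rule_format, of "unit_vec n i + c \<cdot>\<^sub>v unit_vec n j"] ij N col_norm
        by (simp add: vnorm_sq_add_smult[of _ n] vnorm_sq_unit_vec)
    qed
    show ?thesis
      using Re0[of 1] Re0[of "- \<i>"] by (simp add: complex_eq_iff)
  qed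
  have "mat_adjoint N * N = 1\<^sub>m n"
  proof (rule eq_matI)
    fix i j assume "i < dim_row (1\<^sub>m n :: complex mat)" "j < dim_col (1\<^sub>m n :: complex mat)"
    moreover have "row (mat_adjoint N) i = conjugate (col N i)" if "i < n" for i
      using N that by (intro eq_vecI) auto
    ultimately show "(mat_adjoint N * N) $$ (i, j) = 1\<^sub>m n $$ (i, j)"
      using N col_norm col_orth by (auto simp: of_real_vnorm_sq[symmetric])
  qed (use N in auto)
  then show "unitary_mat n N"
    by (rule unitary_mat_if_left_inverse[OF N])
qed

section \<open>Conjugations as symmetric unitary matrices\<close>

lemma conjugate_unit_vec [simp]: "conjugate (unit_vec n i :: complex vec) = unit_vec n i"
  by (intro eq_vecI) (auto simp: unit_vec_def)

definition antilinear_mat :: "nat \<Rightarrow> (complex vec \<Rightarrow> complex vec) \<Rightarrow> complex mat" where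
  "antilinear_mat n C = mat n n (\<lambda>(i, j). C (unit_vec n j) $ i)"

lemma antilinear_mat_carrier [simp]: "antilinear_mat n C \<in> carrier_mat n n"
  and dim_antilinear_mat [simp]: "dim_row (antilinear_mat n C) = n" "dim_col (antilinear_mat n C) = n"
  unfolding antilinear_mat_def by simp_all

lemma antilinear_mat_rep:
  assumes closed: "\<And>v. v \<in> carrier_vec n \<Longrightarrow> C v \<in> carrier_vec n"
    and add: "\<And>v w. v \<in> carrier_vec n \<Longrightarrow> w \<in> carrier_vec n \<Longrightarrow> C (v + w) = C v + C w"
    and smult: "\<And>a v. v \<in> carrier_vec n \<Longrightarrow> C (a \<cdot>\<^sub>v v) = cnj a \<cdot>\<^sub>v C v"
    and x: "x \<in> carrier_vec n"
  shows "C x = antilinear_mat n C *\<^sub>v conjugate x"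
proof -
  let ?N = "antilinear_mat n C"
  define trunc where "trunc k = vec n (\<lambda>i. if i < k then x $ i else 0)" for k
  have trunc_carrier [simp]: "trunc k \<in> carrier_vec n" for k
    unfolding trunc_def by simp
  have col: "?N *\<^sub>v unit_vec n j = C (unit_vec n j)" if "j < n" for j
    using that closed[of "unit_vec n j"]
    by (simp add: mult_unit_vec_eq_col[of _ n n]) (auto simp: antilinear_mat_def)
  have "C (trunc k) = ?N *\<^sub>v conjugate (trunc k)" if "k \<le> n" for k
    using that
  proof (induction k)
    case 0
    have "trunc 0 = 0\<^sub>v n"
      unfolding trunc_def by auto
    moreover have "C (0\<^sub>v n) = 0\<^sub>v n"
    proof -
      have "(0 :: complex) \<cdot>\<^sub>v 0\<^sub>v n = 0\<^sub>v n" "(0 :: complex) \<cdot>\<^sub>v C (0\<^sub>v n) = 0\<^sub>v n"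
        using closed[of "0\<^sub>v n"] by (auto intro!: eq_vecI)
      then show ?thesis
        using smult[of "0\<^sub>v n" 0] by simp
    qed
    ultimately show ?case
      by (auto intro!: eq_vecI simp: scalar_prod_def)
  next
    case (Suc k)
    then have k: "k < n" by simp
    have split: "trunc (Suc k) = trunc k + x $ k \<cdot>\<^sub>v unit_vec n k"
      unfolding trunc_def using k by (intro eq_vecI) (auto simp: less_Suc_eq)
    have "C (trunc (Suc k)) = ?N *\<^sub>v conjugate (trunc k) + cnj (x $ k) \<cdot>\<^sub>v (?N *\<^sub>v unit_vec n k)"
      unfolding split using Suc k by (simp add: add smult col)
    also have "\<dots> = ?N *\<^sub>v conjugate (trunc (Suc k))"
      unfolding split using k
      by (simp add: conjugate_add_vec[of _ n] conjugate_smult_vec mult_add_distrib_mat_vec[of _ n n]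
          mult_mat_vec[of _ n n])
    finally show ?case .
  qed
  moreover have "trunc n = x"
    unfolding trunc_def using x by (intro eq_vecI) auto
  ultimately show ?thesis by auto
qed

lemma conjugation_mat_rep:
  assumes C: "conjugation n C"
  obtains N where "unitary_mat n N" "transpose_mat N = N"
    "\<And>x. x \<in> carrier_vec n \<Longrightarrow> C x = N *\<^sub>v conjugate x"
proof
  let ?N = "antilinear_mat n C"
  have Nc: "?N \<in> carrier_mat n n" by simp
  show rep: "C x = ?N *\<^sub>v conjugate x" if "x \<in> carrier_vec n" for x
    using antilinear_mat_rep[of n C x] C that unfolding conjugation_def by auto
  have "vnorm_sq (?N *\<^sub>v x) = vnorm_sq x" if "x \<in> carrier_vec n" for x
  proof -
    have "vnorm_sq (?N *\<^sub>v x) = vnorm_sq (C (conjugate x))"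
      using rep[of "conjugate x"] that by simp
    also have "\<dots> = vnorm_sq x"
      using C that unfolding conjugation_def by simp
    finally show ?thesis .
  qed
  then show N: "unitary_mat n ?N"
    using unitary_mat_iff_isometry[OF Nc] by simp
  have involution: "?N * conj_mat ?N = 1\<^sub>m n"
  proof (rule eq_mat_on_vecI[of _ n n])
    fix x :: "complex vec" assume x: "x \<in> carrier_vec n"
    have Cx: "C x \<in> carrier_vec n"
      using C x unfolding conjugation_def by simp
    have "(?N * conj_mat ?N) *\<^sub>v x = ?N *\<^sub>v conjugate (?N *\<^sub>v conjugate x)"
      using x assoc_mult_mat_vec[of ?N n n "conj_mat ?N" n x]
      by (simp add: conj_mat_mult_vec_conjugate[of _ n n])
    also have "\<dots> = C (C x)"
      using rep[OF x] rep[OF Cx] by simp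
    also have "\<dots> = 1\<^sub>m n *\<^sub>v x"
      using C x unfolding conjugation_def by simp
    finally show "(?N * conj_mat ?N) *\<^sub>v x = 1\<^sub>m n *\<^sub>v x" .
  qed (auto intro!: mult_carrier_mat[of _ n n])
  have "conj_mat ?N = (mat_adjoint ?N * ?N) * conj_mat ?N"
    using N by (simp add: unitary_mat_def)
  also have "\<dots> = mat_adjoint ?N * (?N * conj_mat ?N)"
    by (intro assoc_mult_mat[of _ n n _ n _ n]) auto
  also have "\<dots> = mat_adjoint ?N"
    using involution by simp
  finally show "transpose_mat ?N = ?N"
    by (metis conj_mat_conj_mat conj_mat_transpose transpose_transpose)
qed

lemma conjugation_unitary_transform:
  assumes C: "conjugation n C" and W: "unitary_mat n W"
  shows "conjugation n (\<lambda>x. mat_adjoint W *\<^sub>v C (W *\<^sub>v x))"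
proof -
  have Wc: "W \<in> carrier_mat n n" using W by (rule unitary_mat_carrier)
  have W_iso: "vnorm_sq (W *\<^sub>v x) = vnorm_sq x" "vnorm_sq (mat_adjoint W *\<^sub>v x) = vnorm_sq x"
    if "x \<in> carrier_vec n" for x
    using that W unitary_mat_adjoint[OF W] Wc unitary_mat_iff_isometry[of W n]
      unitary_mat_iff_isometry[of "mat_adjoint W" n] by auto
  show ?thesis
    using C Wc unfolding conjugation_def
    by (auto simp: mult_add_distrib_mat_vec[of _ n n] mult_mat_vec[of _ n n] W_iso
        unitary_mat_vec_cancel[OF W])
qed

lemma conj_commute_if_antilinear_commute:
  assumes N: "unitary_mat n N" "transpose_mat N = N" and D: "D \<in> carrier_mat n n"
    and commute: "\<And>x. x \<in> carrier_vec n \<Longrightarrow> N *\<^sub>v conjugate (D *\<^sub>v (N *\<^sub>v conjugate x)) = D *\<^sub>v x"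
  shows "N * conj_mat D = D * N"
proof -
  have Nc: "N \<in> carrier_mat n n" using N by (simp add: unitary_mat_carrier)
  have conj_N: "conj_mat N = mat_adjoint N"
    using N(2) conj_mat_transpose[of N] by simp
  have similar: "N * conj_mat D * conj_mat N = D"
  proof (rule eq_mat_on_vecI[of _ n n])
    fix x :: "complex vec" assume x: "x \<in> carrier_vec n"
    have "(N * conj_mat D * conj_mat N) *\<^sub>v x = N *\<^sub>v (conj_mat D *\<^sub>v (conj_mat N *\<^sub>v x))"
      using Nc D x assoc_mult_mat_vec[of "N * conj_mat D" n n "conj_mat N" n x]
        assoc_mult_mat_vec[of N n n "conj_mat D" n "conj_mat N *\<^sub>v x"] by simp
    then show "(N * conj_mat D * conj_mat N) *\<^sub>v x = D *\<^sub>v x"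
      using Nc D x commute[OF x] by (simp add: conj_mat_mult_vec_conjugate[of _ n n])
  qed (use Nc D in auto)
  then have "D * N = (N * conj_mat D * conj_mat N) * N"
    by simp
  also have "\<dots> = N * conj_mat D * (conj_mat N * N)"
    using Nc D by (intro assoc_mult_mat[of _ n n _ n _ n]) auto
  also have "conj_mat N * N = 1\<^sub>m n"
    using N conj_N by (simp add: unitary_mat_def)
  finally show ?thesis
    using Nc D by simp
qed

lemma conjugation_commuting_rep:
  assumes C: "conjugation n C" and W: "unitary_mat n W" and D: "D \<in> carrier_mat n n"
    and commute: "\<And>x. x \<in> carrier_vec n \<Longrightarrow>
      C ((W * D * mat_adjoint W) *\<^sub>v C x) = (W * D * mat_adjoint W) *\<^sub>v x"
  obtains M where "unitary_mat n M" "transpose_mat M = M" "M * conj_mat D = D * M"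
    "\<And>x. x \<in> carrier_vec n \<Longrightarrow> C x = (W * M) *\<^sub>v conjugate (mat_adjoint W *\<^sub>v x)"
proof -
  have Wc: "W \<in> carrier_mat n n"
    using W by (rule unitary_mat_carrier)
  have C_carrier: "C x \<in> carrier_vec n" if "x \<in> carrier_vec n" for x
    using C that unfolding conjugation_def by simp
  define C' where "C' x = mat_adjoint W *\<^sub>v C (W *\<^sub>v x)" for x
  obtain M where M: "unitary_mat n M" "transpose_mat M = M"
    and rep: "\<And>x. x \<in> carrier_vec n \<Longrightarrow> C' x = M *\<^sub>v conjugate x"
    using conjugation_mat_rep[OF conjugation_unitary_transform[OF C W]] unfolding C'_def by blast
  have Mc: "M \<in> carrier_mat n n"
    using M(1) by (rule unitary_mat_carrier)
  have similar: "(W * D * mat_adjoint W) *\<^sub>v v = W *\<^sub>v (D *\<^sub>v (mat_adjoint W *\<^sub>v v))"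
    if "v \<in> carrier_vec n" for v
    using that Wc D by (simp add: assoc_mult_mat_vec[of _ n n _ n])
  have "M *\<^sub>v conjugate (D *\<^sub>v (M *\<^sub>v conjugate x)) = D *\<^sub>v x" if x: "x \<in> carrier_vec n" for x
  proof -
    have Wx: "W *\<^sub>v x \<in> carrier_vec n" and CWx: "C (W *\<^sub>v x) \<in> carrier_vec n"
      using x Wc C_carrier by auto
    have "D *\<^sub>v (M *\<^sub>v conjugate x) \<in> carrier_vec n"
      using x D Mc by simp
    then have "M *\<^sub>v conjugate (D *\<^sub>v (M *\<^sub>v conjugate x)) = C' (D *\<^sub>v C' x)"
      using rep[OF x] rep[of "D *\<^sub>v (M *\<^sub>v conjugate x)"] by simp
    also have "\<dots> = mat_adjoint W *\<^sub>v C ((W * D * mat_adjoint W) *\<^sub>v C (W *\<^sub>v x))"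
      unfolding C'_def similar[OF CWx] ..
    also have "\<dots> = D *\<^sub>v x"
      unfolding commute[OF Wx] similar[OF Wx] using x D Wc by (simp add: unitary_mat_vec_cancel[OF W])
    finally show ?thesis .
  qed
  then have "M * conj_mat D = D * M"
    by (rule conj_commute_if_antilinear_commute[OF M D])
  moreover have "C x = (W * M) *\<^sub>v conjugate (mat_adjoint W *\<^sub>v x)" if x: "x \<in> carrier_vec n" for x
  proof -
    have "C x = W *\<^sub>v C' (mat_adjoint W *\<^sub>v x)"
      using x Wc C_carrier by (simp add: C'_def unitary_mat_vec_cancel[OF W])
    then show ?thesis
      using x Wc Mc rep by (simp add: assoc_mult_mat_vec[of _ n n _ n])
  qed
  ultimately show ?thesis
    using that M by blast
qed

section \<open>The canonical diagonal unitary\<close>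

lemma diagonal_mat_four_block_mat:
  assumes "A \<in> carrier_mat a a" "D \<in> carrier_mat b b" and diag: "diagonal_mat A" "diagonal_mat D"
  shows "diagonal_mat (four_block_mat A (0\<^sub>m a b) (0\<^sub>m b a) D)"
proof -
  have dims: "dim_row A = a" "dim_col A = a" "dim_row D = b" "dim_col D = b"
    using assms(1,2) by auto
  show ?thesis
    using diag unfolding diagonal_mat_def dims by (auto simp: dims)
qed

lemma diag_block_mat_Cons_square:
  assumes "dim_col A = dim_row A" "dim_col (diag_block_mat As) = dim_row (diag_block_mat As)"
  shows "diag_block_mat (A # As) = four_block_mat A (0\<^sub>m (dim_row A) (dim_row (diag_block_mat As)))
    (0\<^sub>m (dim_row (diag_block_mat As)) (dim_row A)) (diag_block_mat As)"
  using assms by (simp only: diag_block_mat.simps Let_def)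

lemma diagonal_mat_diag_block_mat:
  "(\<And>A. A \<in> set As \<Longrightarrow> square_mat A \<and> diagonal_mat A) \<Longrightarrow> diagonal_mat (diag_block_mat As)"
proof (induction As)
  case Nil
  then show ?case by (simp add: diagonal_mat_def)
next
  case (Cons A As)
  let ?B = "diag_block_mat As"
  have A: "dim_col A = dim_row A" "diagonal_mat A"
    using Cons.prems[of A] by auto
  have B: "dim_col ?B = dim_row ?B" "diagonal_mat ?B"
    using Cons.prems Cons.IH diag_block_mat_square[of As] by auto
  have carrier: "A \<in> carrier_mat (dim_row A) (dim_row A)" "?B \<in> carrier_mat (dim_row ?B) (dim_row ?B)"
    using A B unfolding carrier_mat_def by simp_all
  show ?case
    unfolding diag_block_mat_Cons_square[OF A(1) B(1)]
    using diagonal_mat_four_block_mat[OF carrier A(2) B(2)] .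
qed

lemma diag_mat_diag_block_mat:
  "(\<And>A. A \<in> set As \<Longrightarrow> square_mat A) \<Longrightarrow> diag_mat (diag_block_mat As) = concat (map diag_mat As)"
proof (induction As)
  case Nil
  then show ?case by (simp add: diag_mat_def)
next
  case (Cons A As)
  let ?B = "diag_block_mat As"
  have A: "dim_col A = dim_row A"
    using Cons.prems[of A] by auto
  have B: "dim_col ?B = dim_row ?B" "diag_mat ?B = concat (map diag_mat As)"
    using Cons.prems Cons.IH diag_block_mat_square[of As] by auto
  have carrier: "A \<in> carrier_mat (dim_row A) (dim_row A)" "?B \<in> carrier_mat (dim_row ?B) (dim_row ?B)"
    using A B(1) unfolding carrier_mat_def by simp_all
  show ?case
    unfolding diag_block_mat_Cons_square[OF A B(1)] diag_four_block_mat[OF carrier] B(2) by simp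
qed

lemma diag_mat_smult_one [simp]: "diag_mat ((c :: 'a :: semiring_1) \<cdot>\<^sub>m 1\<^sub>m n) = replicate n c"
  by (rule nth_equalityI) (simp_all add: diag_mat_def)

lemma diagonal_mat_smult_one [simp]: "diagonal_mat ((c :: 'a :: semiring_1) \<cdot>\<^sub>m 1\<^sub>m n)"
  by (simp add: diagonal_mat_def)

text \<open>The matrix U' of the theorem, where ps lists the pairs (xi_j, n_j).\<close>

definition canonical_unitary :: "(complex \<times> nat) list \<Rightarrow> nat \<Rightarrow> nat \<Rightarrow> complex mat" where
  "canonical_unitary ps l k = diag_block_mat (map (\<lambda>(x, m). rot_block x m) ps @
     [four_block_mat (1\<^sub>m l) (0\<^sub>m l k) (0\<^sub>m k l) (- 1\<^sub>m k)])"

definition canonical_eigenvalues :: "(complex \<times> nat) list \<Rightarrow> nat \<Rightarrow> nat \<Rightarrow> complex list" where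
  "canonical_eigenvalues ps l k =
     concat (map (\<lambda>(x, m). replicate m x @ replicate m (cnj x)) ps) @ replicate l 1 @ replicate k (- 1)"

lemma rot_block_diagonal:
  shows "rot_block x m \<in> carrier_mat (2 * m) (2 * m)"
    and "diagonal_mat (rot_block x m)"
    and "diag_mat (rot_block x m) = replicate m x @ replicate m (cnj x)"
  unfolding rot_block_def mult_2
  by (auto intro!: diagonal_mat_four_block_mat simp: diag_four_block_mat[of _ m _ m])

lemma sign_block_diagonal:
  shows "four_block_mat (1\<^sub>m l) (0\<^sub>m l k) (0\<^sub>m k l) (- 1\<^sub>m k) \<in> carrier_mat (l + k) (l + k)"
    and "diagonal_mat (four_block_mat (1\<^sub>m l) (0\<^sub>m l k) (0\<^sub>m k l) (- 1\<^sub>m k :: complex mat))"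
    and "diag_mat (four_block_mat (1\<^sub>m l) (0\<^sub>m l k) (0\<^sub>m k l) (- 1\<^sub>m k)) =
      replicate l 1 @ replicate k (- 1 :: complex)"
proof -
  have "four_block_mat (1\<^sub>m l) (0\<^sub>m l k) (0\<^sub>m k l) (- 1\<^sub>m k) =
    four_block_mat (1 \<cdot>\<^sub>m 1\<^sub>m l) (0\<^sub>m l k) (0\<^sub>m k l) ((- 1 :: complex) \<cdot>\<^sub>m 1\<^sub>m k)"
    by (rule eq_matI) auto
  then show "four_block_mat (1\<^sub>m l) (0\<^sub>m l k) (0\<^sub>m k l) (- 1\<^sub>m k) \<in> carrier_mat (l + k) (l + k)"
    and "diagonal_mat (four_block_mat (1\<^sub>m l) (0\<^sub>m l k) (0\<^sub>m k l) (- 1\<^sub>m k :: complex mat))"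
    and "diag_mat (four_block_mat (1\<^sub>m l) (0\<^sub>m l k) (0\<^sub>m k l) (- 1\<^sub>m k)) =
      replicate l 1 @ replicate k (- 1 :: complex)"
    by (auto intro!: diagonal_mat_four_block_mat simp: diag_four_block_mat[of _ l _ k])
qed

lemma canonical_unitary_diagonal:
  shows "canonical_unitary ps l k \<in>
      carrier_mat (2 * sum_list (map snd ps) + l + k) (2 * sum_list (map snd ps) + l + k)"
    and "diagonal_mat (canonical_unitary ps l k)"
    and "diag_mat (canonical_unitary ps l k) = canonical_eigenvalues ps l k"
proof -
  let ?S = "four_block_mat (1\<^sub>m l) (0\<^sub>m l k) (0\<^sub>m k l) (- 1\<^sub>m k) :: complex mat"
  let ?blocks = "map (\<lambda>(x, m). rot_block x m) ps @ [?S]"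
  have dim_rot: "dim_row (rot_block x m) = 2 * m" "dim_col (rot_block x m) = 2 * m" for x m
    using rot_block_diagonal(1)[of x m] unfolding carrier_mat_def by simp_all
  have dim_S: "dim_row ?S = l + k" "dim_col ?S = l + k"
    by simp_all
  have blocks: "square_mat A \<and> diagonal_mat A" if "A \<in> set ?blocks" for A
  proof -
    from that consider x m where "A = rot_block x m" | "A = ?S" by auto
    then show ?thesis
      by cases (simp_all only: square_mat.simps dim_rot dim_S rot_block_diagonal(2) sign_block_diagonal(2))
  qed
  have rows: "map dim_row ?blocks = map (\<lambda>p. 2 * snd p) ps @ [l + k]"
    by (simp only: map_append list.map dim_S) (simp add: dim_rot case_prod_unfold)
  have "dim_row (canonical_unitary ps l k) = sum_list (map (\<lambda>p. 2 * snd p) ps @ [l + k])"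
    by (simp only: canonical_unitary_def dim_diag_block_mat rows)
  also have "\<dots> = 2 * sum_list (map snd ps) + l + k"
    by (simp add: sum_list_const_mult)
  finally have "dim_row (canonical_unitary ps l k) = 2 * sum_list (map snd ps) + l + k" .
  moreover have "square_mat (canonical_unitary ps l k)"
    unfolding canonical_unitary_def using blocks by (intro diag_block_mat_square) auto
  ultimately show "canonical_unitary ps l k \<in>
      carrier_mat (2 * sum_list (map snd ps) + l + k) (2 * sum_list (map snd ps) + l + k)"
    unfolding carrier_mat_def by simp
  show "diagonal_mat (canonical_unitary ps l k)"
    unfolding canonical_unitary_def using blocks by (intro diagonal_mat_diag_block_mat) auto
  have "diag_mat (canonical_unitary ps l k) = concat (map diag_mat ?blocks)"
    unfolding canonical_unitary_def using blocks by (intro diag_mat_diag_block_mat) auto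
  also have "map diag_mat ?blocks = map (\<lambda>(x, m). replicate m x @ replicate m (cnj x)) ps @
      [replicate l 1 @ replicate k (- 1)]"
    by (simp add: rot_block_diagonal(3) sign_block_diagonal(3) case_prod_unfold)
  finally show "diag_mat (canonical_unitary ps l k) = canonical_eigenvalues ps l k"
    unfolding canonical_eigenvalues_def by simp
qed

lemma set_canonical_eigenvalues:
  "set (canonical_eigenvalues ps l k) \<subseteq> fst ` set ps \<union> cnj ` fst ` set ps \<union> {1, - 1}"
  unfolding canonical_eigenvalues_def by (force simp: image_iff)

lemma length_canonical_eigenvalues:
  "length (canonical_eigenvalues ps l k) = 2 * sum_list (map snd ps) + l + k"
  unfolding canonical_eigenvalues_def by (induction ps) auto

section \<open>Symmetric unitaries intertwining the canonical unitary with its conjugate\<close>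

text \<open>For diagonal D with diagonal e, this is the entrywise form of M * conj_mat D = D * M.\<close>

definition conj_compatible :: "complex list \<Rightarrow> complex mat \<Rightarrow> bool" where
  "conj_compatible e M \<longleftrightarrow>
     (\<forall>i<dim_row M. \<forall>j<dim_col M. M $$ (i, j) \<noteq> 0 \<longrightarrow> e ! i = cnj (e ! j))"

lemma conj_compatible_if_conj_commute:
  assumes D: "D \<in> carrier_mat n n" "diagonal_mat D" and M: "M \<in> carrier_mat n n"
    and commute: "M * conj_mat D = D * M"
  shows "conj_compatible (diag_mat D) M"
  unfolding conj_compatible_def
proof (intro allI impI)
  fix i j assume i: "i < dim_row M" and j: "j < dim_col M" and nz: "M $$ (i, j) \<noteq> 0"
  have off_diag: "D $$ (p, q) = 0" if "p < n" "q < n" "p \<noteq> q" for p q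
    using D that unfolding diagonal_mat_def by auto
  have "(M * conj_mat D) $$ (i, j) = (\<Sum>p\<in>{0..<n}. M $$ (i, p) * cnj (D $$ (p, j)))"
    using D M i j by (simp add: scalar_prod_def)
  also have "\<dots> = M $$ (i, j) * cnj (D $$ (j, j))"
    using M j off_diag by (subst sum.remove[of _ j]) (auto intro!: sum.neutral)
  finally have left: "(M * conj_mat D) $$ (i, j) = M $$ (i, j) * cnj (D $$ (j, j))" .
  have "(D * M) $$ (i, j) = (\<Sum>p\<in>{0..<n}. D $$ (i, p) * M $$ (p, j))"
    using D M i j by (simp add: scalar_prod_def)
  also have "\<dots> = D $$ (i, i) * M $$ (i, j)"
    using M i off_diag by (subst sum.remove[of _ i]) (auto intro!: sum.neutral)
  finally have "M $$ (i, j) * cnj (D $$ (j, j)) = M $$ (i, j) * D $$ (i, i)"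
    using commute left by (metis mult.commute)
  then have "D $$ (i, i) = cnj (D $$ (j, j))"
    using nz by simp
  then show "diag_mat D ! i = cnj (diag_mat D ! j)"
    using D M i j by (simp add: diag_mat_def)
qed

lemma four_block_mat_inj:
  assumes "A \<in> carrier_mat r1 c1" "B \<in> carrier_mat r1 c2" "C \<in> carrier_mat r2 c1" "D \<in> carrier_mat r2 c2"
    and "A' \<in> carrier_mat r1 c1" "B' \<in> carrier_mat r1 c2" "C' \<in> carrier_mat r2 c1" "D' \<in> carrier_mat r2 c2"
    and eq: "four_block_mat A B C D = four_block_mat A' B' C' D'"
  shows "A = A'" "B = B'" "C = C'" "D = D'"
proof -
  have dims: "dim_row A = r1" "dim_col A = c1" "dim_row D = r2" "dim_col D = c2"
    "dim_row A' = r1" "dim_col A' = c1" "dim_row D' = r2" "dim_col D' = c2"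
    "dim_row B = r1" "dim_col B = c2" "dim_row C = r2" "dim_col C = c1"
    "dim_row B' = r1" "dim_col B' = c2" "dim_row C' = r2" "dim_col C' = c1"
    using assms(1-8) by auto
  have entry: "four_block_mat A B C D $$ (i, j) = four_block_mat A' B' C' D' $$ (i, j)" for i j
    using eq by simp
  show "A = A'"
  proof (rule eq_matI)
    fix i j assume "i < dim_row A'" "j < dim_col A'"
    then show "A $$ (i, j) = A' $$ (i, j)" using entry[of i j] by (simp add: dims)
  qed (simp_all add: dims)
  show "B = B'"
  proof (rule eq_matI)
    fix i j assume "i < dim_row B'" "j < dim_col B'"
    then show "B $$ (i, j) = B' $$ (i, j)" using entry[of i "j + c1"] by (simp add: dims)
  qed (simp_all add: dims)
  show "C = C'"
  proof (rule eq_matI)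
    fix i j assume "i < dim_row C'" "j < dim_col C'"
    then show "C $$ (i, j) = C' $$ (i, j)" using entry[of "i + r1" j] by (simp add: dims)
  qed (simp_all add: dims)
  show "D = D'"
  proof (rule eq_matI)
    fix i j assume "i < dim_row D'" "j < dim_col D'"
    then show "D $$ (i, j) = D' $$ (i, j)" using entry[of "i + r1" "j + c1"] by (simp add: dims)
  qed (simp_all add: dims)
qed

lemma mult_four_block_diag:
  assumes "A \<in> carrier_mat a a" "D \<in> carrier_mat b b" "A' \<in> carrier_mat a a" "D' \<in> carrier_mat b b"
  shows "four_block_mat A (0\<^sub>m a b) (0\<^sub>m b a) D * four_block_mat A' (0\<^sub>m a b) (0\<^sub>m b a) D' =
    four_block_mat (A * A') (0\<^sub>m a b) (0\<^sub>m b a) (D * D')"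
proof -
  have "A * A' \<in> carrier_mat a a" "D * D' \<in> carrier_mat b b"
    using assms by (auto intro: mult_carrier_mat)
  then show ?thesis
    using assms by (simp add: mult_four_block_mat[of A a a _ b _ b D A' a _ b _ D'])
qed

lemma unitary_mat_four_block_diag:
  assumes A: "A \<in> carrier_mat a a" and D: "D \<in> carrier_mat b b"
    and U: "unitary_mat (a + b) (four_block_mat A (0\<^sub>m a b) (0\<^sub>m b a) D)"
  shows "unitary_mat a A" "unitary_mat b D"
proof -
  let ?M = "four_block_mat A (0\<^sub>m a b) (0\<^sub>m b a) D"
  have adj: "mat_adjoint ?M = four_block_mat (mat_adjoint A) (0\<^sub>m a b) (0\<^sub>m b a) (mat_adjoint D)"
    using mat_adjoint_four_block_mat[OF A _ _ D, of "0\<^sub>m a b" "0\<^sub>m b a"] by simp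
  have A': "mat_adjoint A \<in> carrier_mat a a" and D': "mat_adjoint D \<in> carrier_mat b b"
    using A D by simp_all
  have AA: "mat_adjoint A * A \<in> carrier_mat a a" and DD: "mat_adjoint D * D \<in> carrier_mat b b"
    using A D by (auto intro: mult_carrier_mat)
  have "four_block_mat (mat_adjoint A * A) (0\<^sub>m a b) (0\<^sub>m b a) (mat_adjoint D * D) =
      four_block_mat (1\<^sub>m a) (0\<^sub>m a b) (0\<^sub>m b a) (1\<^sub>m b)"
    using U unfolding unitary_mat_def adj by (simp add: mult_four_block_diag A A' D D')
  from four_block_mat_inj[OF AA _ _ DD _ _ _ _ this]
  show "unitary_mat a A" "unitary_mat b D"
    using A D by (auto intro: unitary_mat_if_left_inverse)
qed

lemma symmetric_four_block_diag:
  assumes A: "A \<in> carrier_mat a a" and D: "D \<in> carrier_mat b b"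
    and sym: "transpose_mat (four_block_mat A (0\<^sub>m a b) (0\<^sub>m b a) D) =
      four_block_mat A (0\<^sub>m a b) (0\<^sub>m b a) D"
  shows "transpose_mat A = A" "transpose_mat D = D"
proof -
  have "four_block_mat (transpose_mat A) (0\<^sub>m a b) (0\<^sub>m b a) (transpose_mat D) =
      four_block_mat A (0\<^sub>m a b) (0\<^sub>m b a) D"
    using sym transpose_four_block_mat[OF A _ _ D, of "0\<^sub>m a b" "0\<^sub>m b a"] by simp
  from four_block_mat_inj[OF _ _ _ _ A _ _ D this]
  show "transpose_mat A = A" "transpose_mat D = D"
    using A D by auto
qed

lemma swap_block_eq:
  "V \<in> carrier_mat m m \<Longrightarrow> swap_block V = four_block_mat (0\<^sub>m m m) V (transpose_mat V) (0\<^sub>m m m)"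
  unfolding swap_block_def by auto

lemma unitary_mat_swap_block:
  assumes V: "V \<in> carrier_mat m m" and U: "unitary_mat (m + m) (swap_block V)"
  shows "unitary_mat m V"
proof -
  have Vs: "transpose_mat V \<in> carrier_mat m m" "mat_adjoint V \<in> carrier_mat m m"
    "mat_adjoint (transpose_mat V) \<in> carrier_mat m m"
    using V by simp_all
  have VV: "mat_adjoint V * V \<in> carrier_mat m m" "mat_adjoint (transpose_mat V) * transpose_mat V \<in> carrier_mat m m"
    using V Vs by (auto intro: mult_carrier_mat)
  have "mat_adjoint (swap_block V) =
      four_block_mat (0\<^sub>m m m) (mat_adjoint (transpose_mat V)) (mat_adjoint V) (0\<^sub>m m m)"
    unfolding swap_block_eq[OF V] using V by (simp add: mat_adjoint_four_block_mat[of _ m m _ m _ m])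
  then have "mat_adjoint (swap_block V) * swap_block V = four_block_mat
      (mat_adjoint (transpose_mat V) * transpose_mat V) (0\<^sub>m m m) (0\<^sub>m m m) (mat_adjoint V * V)"
    unfolding swap_block_eq[OF V] using V Vs VV
    by (simp add: mult_four_block_mat[of _ m m _ m _ m _ _ m _ m])
  then have "four_block_mat (mat_adjoint (transpose_mat V) * transpose_mat V) (0\<^sub>m m m) (0\<^sub>m m m)
      (mat_adjoint V * V) = four_block_mat (1\<^sub>m m) (0\<^sub>m m m) (0\<^sub>m m m) (1\<^sub>m m)"
    using U unfolding unitary_mat_def by simp
  from four_block_mat_inj(4)[OF VV(2) _ _ VV(1) _ _ _ _ this]
  show ?thesis
    using V by (auto intro: unitary_mat_if_left_inverse)
qed

lemma block_diag_if_conj_compatible: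
  assumes M: "M \<in> carrier_mat (a + b) (a + b)" and compat: "conj_compatible e M"
    and separated: "\<And>i j. i < a \<Longrightarrow> a \<le> j \<Longrightarrow> j < a + b \<Longrightarrow>
      e ! i \<noteq> cnj (e ! j) \<and> e ! j \<noteq> cnj (e ! i)"
  obtains A D where "A \<in> carrier_mat a a" "D \<in> carrier_mat b b"
    "M = four_block_mat A (0\<^sub>m a b) (0\<^sub>m b a) D"
proof -
  obtain A B C D where split: "split_block M a a = (A, B, C, D)"
    by (metis prod_cases4)
  have dims: "dim_row M = a + b" "dim_col M = a + b"
    using M by auto
  note blocks = split_block[OF split dims]
  have entry: "e ! i = cnj (e ! j)" if "i < a + b" "j < a + b" "M $$ (i, j) \<noteq> 0" for i j
    using compat that dims unfolding conj_compatible_def by simp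
  have zero: "M $$ (i, j) = 0" if "i < a + b" "j < a + b" "i < a \<longleftrightarrow> \<not> j < a" for i j
    using entry[of i j] separated[of i j] separated[of j i] that by (cases "i < a") auto
  have "B = 0\<^sub>m a b"
  proof (rule eq_matI)
    fix i j assume "i < dim_row (0\<^sub>m a b :: complex mat)" "j < dim_col (0\<^sub>m a b :: complex mat)"
    then show "B $$ (i, j) = 0\<^sub>m a b $$ (i, j)"
      using zero[of i "j + a"] blocks by simp
  qed (use blocks in auto)
  moreover have "C = 0\<^sub>m b a"
  proof (rule eq_matI)
    fix i j assume "i < dim_row (0\<^sub>m b a :: complex mat)" "j < dim_col (0\<^sub>m b a :: complex mat)"
    then show "C $$ (i, j) = 0\<^sub>m b a $$ (i, j)"
      using zero[of "i + a" j] blocks by simp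
  qed (use blocks in auto)
  ultimately show ?thesis
    using that blocks by simp
qed

lemma conj_compatible_four_block_diag:
  assumes A: "A \<in> carrier_mat a a" and D: "D \<in> carrier_mat b b" and len: "length e1 = a"
    and compat: "conj_compatible (e1 @ e2) (four_block_mat A (0\<^sub>m a b) (0\<^sub>m b a) D)"
  shows "conj_compatible e1 A" "conj_compatible e2 D"
proof -
  have entry: "(e1 @ e2) ! i = cnj ((e1 @ e2) ! j)"
    if "i < a + b" "j < a + b" "four_block_mat A (0\<^sub>m a b) (0\<^sub>m b a) D $$ (i, j) \<noteq> 0" for i j
    using compat that A D unfolding conj_compatible_def by auto
  show "conj_compatible e1 A"
    unfolding conj_compatible_def
  proof (intro allI impI)
    fix i j assume "i < dim_row A" "j < dim_col A" "A $$ (i, j) \<noteq> 0"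
    then show "e1 ! i = cnj (e1 ! j)"
      using entry[of i j] A D len by (simp add: nth_append)
  qed
  show "conj_compatible e2 D"
    unfolding conj_compatible_def
  proof (intro allI impI)
    fix i j assume "i < dim_row D" "j < dim_col D" "D $$ (i, j) \<noteq> 0"
    then show "e2 ! i = cnj (e2 ! j)"
      using entry[of "i + a" "j + a"] A D len by (simp add: nth_append)
  qed
qed

lemma symmetric_unitary_split_if_conj_compatible:
  assumes U: "unitary_mat (a + b) M" and sym: "transpose_mat M = M"
    and compat: "conj_compatible (e1 @ e2) M" and len: "length e1 = a" "length e2 = b"
    and separated: "\<And>y z. y \<in> set e1 \<Longrightarrow> z \<in> set e2 \<Longrightarrow> y \<noteq> cnj z"
  obtains A D where "unitary_mat a A" "transpose_mat A = A" "conj_compatible e1 A"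
    and "unitary_mat b D" "transpose_mat D = D" "conj_compatible e2 D"
    and "M = four_block_mat A (0\<^sub>m a b) (0\<^sub>m b a) D"
proof -
  have "(e1 @ e2) ! i \<noteq> cnj ((e1 @ e2) ! j) \<and> (e1 @ e2) ! j \<noteq> cnj ((e1 @ e2) ! i)"
    if "i < a" "a \<le> j" "j < a + b" for i j
    using separated[of "e1 ! i" "e2 ! (j - a)"] that len by (auto simp: nth_append)
  with block_diag_if_conj_compatible[OF unitary_mat_carrier[OF U] compat]
  obtain A D where A: "A \<in> carrier_mat a a" and D: "D \<in> carrier_mat b b"
    and M: "M = four_block_mat A (0\<^sub>m a b) (0\<^sub>m b a) D"
    by blast
  show ?thesis
    using that[OF _ _ _ _ _ _ M] U sym compat
      unitary_mat_four_block_diag[OF A D] symmetric_four_block_diag[OF A D]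
      conj_compatible_four_block_diag[OF A D len(1)]
    unfolding M by blast
qed

lemma swap_block_if_conj_compatible:
  assumes A: "A \<in> carrier_mat (m + m) (m + m)" and sym: "transpose_mat A = A"
    and compat: "conj_compatible (replicate m x @ replicate m (cnj x)) A" and x: "x \<noteq> cnj x"
  obtains V where "V \<in> carrier_mat m m" "A = swap_block V"
proof -
  obtain P V Q R where split: "split_block A m m = (P, V, Q, R)"
    by (metis prod_cases4)
  have dims: "dim_row A = m + m" "dim_col A = m + m"
    using A by auto
  note blocks = split_block[OF split dims]
  have eigenvalue: "(replicate m x @ replicate m (cnj x)) ! i = (if i < m then x else cnj x)"
    if "i < m + m" for i
    using that by (simp add: nth_append)
  have zero: "A $$ (i, j) = 0" if "i < m + m" "j < m + m" "i < m \<longleftrightarrow> j < m" for i j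
  proof (rule ccontr)
    assume "A $$ (i, j) \<noteq> 0"
    then have "(replicate m x @ replicate m (cnj x)) ! i = cnj ((replicate m x @ replicate m (cnj x)) ! j)"
      using compat that dims unfolding conj_compatible_def by simp
    then show False
      using x that eigenvalue[of i] eigenvalue[of j] by (cases "i < m") (auto simp: complex_cnj_cancel_iff)
  qed
  have "P = 0\<^sub>m m m"
  proof (rule eq_matI)
    fix i j assume "i < dim_row (0\<^sub>m m m :: complex mat)" "j < dim_col (0\<^sub>m m m :: complex mat)"
    then show "P $$ (i, j) = 0\<^sub>m m m $$ (i, j)"
      using zero[of i j] blocks by simp
  qed (use blocks in auto)
  moreover have "R = 0\<^sub>m m m"
  proof (rule eq_matI)
    fix i j assume "i < dim_row (0\<^sub>m m m :: complex mat)" "j < dim_col (0\<^sub>m m m :: complex mat)"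
    then show "R $$ (i, j) = 0\<^sub>m m m $$ (i, j)"
      using zero[of "i + m" "j + m"] blocks by simp
  qed (use blocks in auto)
  moreover have "Q = transpose_mat V"
  proof -
    have "four_block_mat (transpose_mat P) (transpose_mat Q) (transpose_mat V) (transpose_mat R) =
        four_block_mat P V Q R"
      using sym blocks transpose_four_block_mat[of P m m V m Q m R] by simp
    from four_block_mat_inj(2)[OF _ _ _ _ blocks(1-4) this]
    show ?thesis
      using blocks by auto
  qed
  ultimately show ?thesis
    using that blocks swap_block_eq by simp
qed

lemma symmetric_unitary_block_form:
  assumes "unitary_mat (2 * sum_list (map snd ps) + l + k) M" "transpose_mat M = M"
    and "conj_compatible (canonical_eigenvalues ps l k) M"
    and "1 \<notin> fst ` set ps" "- 1 \<notin> fst ` set ps" "distinct (map fst ps @ map (cnj \<circ> fst) ps)"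
  shows "\<exists>Vs Ql Qk. list_all2 unitary_mat (map snd ps) Vs \<and>
    unitary_mat l Ql \<and> transpose_mat Ql = Ql \<and> unitary_mat k Qk \<and> transpose_mat Qk = Qk \<and>
    M = diag_block_mat (map swap_block Vs @ [four_block_mat Ql (0\<^sub>m l k) (0\<^sub>m k l) Qk])"
  using assms
proof (induction ps arbitrary: M)
  case Nil
  then have "unitary_mat (l + k) M" "transpose_mat M = M"
    "conj_compatible (replicate l 1 @ replicate k (- 1)) M"
    by (simp_all add: canonical_eigenvalues_def)
  then obtain Ql Qk where "unitary_mat l Ql" "transpose_mat Ql = Ql"
    "unitary_mat k Qk" "transpose_mat Qk = Qk" "M = four_block_mat Ql (0\<^sub>m l k) (0\<^sub>m k l) Qk"
    by (rule symmetric_unitary_split_if_conj_compatible) auto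
  then show ?case
    by (intro exI[of _ "[]"] exI[of _ Ql] exI[of _ Qk]) (simp del: diag_block_mat.simps(2))
next
  case (Cons p ps)
  obtain x m where p: "p = (x, m)"
    by fastforce
  let ?n = "2 * sum_list (map snd ps) + l + k"
  let ?e = "canonical_eigenvalues ps l k"
  have x_pm1: "x \<noteq> 1" "x \<noteq> - 1" "cnj x \<noteq> 1" "cnj x \<noteq> - 1"
    using Cons.prems(4,5) unfolding p by (auto simp: complex_eq_iff)
  have "x \<notin> fst ` set ps \<union> cnj ` fst ` set ps" "cnj x \<notin> fst ` set ps \<union> cnj ` fst ` set ps"
    and x_real: "x \<noteq> cnj x"
    using Cons.prems(6) unfolding p by (auto simp: image_iff)
  then have x: "x \<notin> set ?e" "cnj x \<notin> set ?e"
    using x_pm1 set_canonical_eigenvalues[of ps l k] by blast+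
  have "unitary_mat ((m + m) + ?n) M" "transpose_mat M = M"
    "conj_compatible ((replicate m x @ replicate m (cnj x)) @ ?e) M"
    using Cons.prems(1-3) unfolding p by (simp_all add: canonical_eigenvalues_def algebra_simps)
  then obtain A D where A: "unitary_mat (m + m) A" "transpose_mat A = A"
    "conj_compatible (replicate m x @ replicate m (cnj x)) A"
    and D: "unitary_mat ?n D" "transpose_mat D = D" "conj_compatible ?e D"
    and M: "M = four_block_mat A (0\<^sub>m (m + m) ?n) (0\<^sub>m ?n (m + m)) D"
    by (rule symmetric_unitary_split_if_conj_compatible)
      (use x in \<open>auto simp: length_canonical_eigenvalues\<close>)
  obtain V where V: "V \<in> carrier_mat m m" and AV: "A = swap_block V"
    using swap_block_if_conj_compatible[OF unitary_mat_carrier[OF A(1)] A(2,3) x_real] by blast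
  obtain Vs Ql Qk where IH: "list_all2 unitary_mat (map snd ps) Vs"
    "unitary_mat l Ql" "transpose_mat Ql = Ql" "unitary_mat k Qk" "transpose_mat Qk = Qk"
    "D = diag_block_mat (map swap_block Vs @ [four_block_mat Ql (0\<^sub>m l k) (0\<^sub>m k l) Qk])"
    using Cons.IH[OF D] Cons.prems(4-6) by auto
  have "dim_row (swap_block V) = m + m" "dim_col (swap_block V) = m + m"
    "dim_row D = ?n" "dim_col D = ?n"
    using V unitary_mat_carrier[OF D(1)] by (auto simp: swap_block_def)
  then have "M = diag_block_mat (map swap_block (V # Vs) @ [four_block_mat Ql (0\<^sub>m l k) (0\<^sub>m k l) Qk])"
    using M AV IH(6) by (simp add: Let_def)
  moreover have "list_all2 unitary_mat (map snd (p # ps)) (V # Vs)"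
    using unitary_mat_swap_block[OF V] A(1) AV IH(1) unfolding p by simp
  ultimately show ?case
    using IH(2-5) by blast
qed

theorem theorem3p3:
  fixes n l k :: nat and ns :: "nat list" and xis :: "complex list"
    and U W :: "complex mat" and C :: "complex vec \<Rightarrow> complex vec"
  assumes U_unitary: "unitary_mat n U"
    and W_unitary: "unitary_mat n W"
    and len: "length xis = length ns"
    and ns_pos: "\<forall>j<length ns. ns ! j \<ge> 1"
    and dim: "2 * sum_list ns + l + k = n"
    and xis_T: "\<forall>j<length xis. cmod (xis ! j) = 1 \<and> xis ! j \<noteq> 1 \<and> xis ! j \<noteq> -1"
    and xis_distinct: "distinct (xis @ map cnj xis)"
    and U_eq: "U = W * diag_block_mat
                  (map (\<lambda>j. rot_block (xis ! j) (ns ! j)) [0..<length ns] @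
                   [four_block_mat (1\<^sub>m l) (0\<^sub>m l k) (0\<^sub>m k l) (- 1\<^sub>m k)])
                * mat_adjoint W"
    and C_conj: "conjugation n C"
    and CUC: "\<forall>x\<in>carrier_vec n. C (U *\<^sub>v C x) = U *\<^sub>v x"
  shows "\<exists>Vs Ql Qk.
           length Vs = length ns \<and>
           (\<forall>j<length ns. unitary_mat (ns ! j) (Vs ! j)) \<and>
           unitary_mat l Ql \<and> transpose_mat Ql = Ql \<and>
           unitary_mat k Qk \<and> transpose_mat Qk = Qk \<and>
           (\<forall>x\<in>carrier_vec n.
              C x = (W * diag_block_mat (map swap_block Vs @ [four_block_mat Ql (0\<^sub>m l k) (0\<^sub>m k l) Qk]))
                    *\<^sub>v conjugate (mat_adjoint W *\<^sub>v x))"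
proof -
  define ps where "ps = zip xis ns"
  have ps: "map fst ps = xis" "map snd ps = ns"
    using len unfolding ps_def by simp_all
  define D where "D = canonical_unitary ps l k"
  have D: "D \<in> carrier_mat n n" "diagonal_mat D" "diag_mat D = canonical_eigenvalues ps l k"
    using canonical_unitary_diagonal[of ps l k] dim ps unfolding D_def by simp_all
  have "map (\<lambda>j. rot_block (xis ! j) (ns ! j)) [0..<length ns] = map (\<lambda>(x, m). rot_block x m) ps"
    using len unfolding ps_def by (intro nth_equalityI) auto
  then have "U = W * D * mat_adjoint W"
    unfolding U_eq D_def canonical_unitary_def by simp
  then obtain M where M: "unitary_mat n M" "transpose_mat M = M" "M * conj_mat D = D * M"
    and C_rep: "\<And>x. x \<in> carrier_vec n \<Longrightarrow> C x = (W * M) *\<^sub>v conjugate (mat_adjoint W *\<^sub>v x)"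
    using conjugation_commuting_rep[OF C_conj W_unitary D(1)] CUC by auto
  have "conj_compatible (canonical_eigenvalues ps l k) M"
    using conj_compatible_if_conj_commute[OF D(1,2) unitary_mat_carrier[OF M(1)] M(3)] D(3) by simp
  moreover have "fst ` set ps = set xis" "map (cnj \<circ> fst) ps = map cnj xis"
    using ps(1) by (metis set_map, metis map_map)
  then have "1 \<notin> fst ` set ps" "- 1 \<notin> fst ` set ps" "distinct (map fst ps @ map (cnj \<circ> fst) ps)"
    using xis_T xis_distinct ps(1) by (auto simp: in_set_conv_nth)
  ultimately obtain Vs Ql Qk where "list_all2 unitary_mat ns Vs"
    "unitary_mat l Ql" "transpose_mat Ql = Ql" "unitary_mat k Qk" "transpose_mat Qk = Qk"
    "M = diag_block_mat (map swap_block Vs @ [four_block_mat Ql (0\<^sub>m l k) (0\<^sub>m k l) Qk])"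
    using symmetric_unitary_block_form[of ps l k M] M(1,2) dim ps by auto
  then show ?thesis
    using C_rep by (intro exI[of _ Vs] exI[of _ Ql] exI[of _ Qk]) (auto simp: list_all2_conv_all_nth)
qed

end
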